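(* For every connected graph $G$ of order $n\geq 2$, $\mathrm{ldim}_f(G)\leq \frac{n}{2}$.
   Context: All graphs are finite, simple and connected; $d$ is the shortest-path distance. For an edge $uv$, $L(uv)=\{x\in V(G): d(u,x)\neq d(v,x)\}$. A function $f:V(G)\to[0,1]$ is a local resolving function of $G$ if $\sum_{x\in L(uv)}f(x)\geq 1$ for every edge $uv$; $\mathrm{ldim}_f(G)$ is the minimum of $\sum_{v}f(v)$ over all local resolving functions. *)

theory Defs
  imports Complex_Main
begin

definition simple_graph :: "'a set \<Rightarrow> ('a \<Rightarrow> 'a \<Rightarrow> bool) \<Rightarrow> bool" where
  "simple_graph V E \<longleftrightarrow> finite V \<and> (\<forall>u v. E u v \<longrightarrow> u \<in> V \<and> v \<in> V)
     \<and> (\<forall>u v. E u v \<longrightarrow> E v u) \<and> (\<forall>v. \<not> E v v)"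

text \<open>A walk of length n from u to v: a vertex list of length n+1.\<close>
definition walk :: "'a set \<Rightarrow> ('a \<Rightarrow> 'a \<Rightarrow> bool) \<Rightarrow> 'a list \<Rightarrow> bool" where
  "walk V E p \<longleftrightarrow> p \<noteq> [] \<and> set p \<subseteq> V \<and> (\<forall>i. Suc i < length p \<longrightarrow> E (p ! i) (p ! Suc i))"

definition connected_graph :: "'a set \<Rightarrow> ('a \<Rightarrow> 'a \<Rightarrow> bool) \<Rightarrow> bool" where
  "connected_graph V E \<longleftrightarrow> V \<noteq> {} \<and>
     (\<forall>u\<in>V. \<forall>v\<in>V. \<exists>p. walk V E p \<and> hd p = u \<and> last p = v)"

definition gdist :: "'a set \<Rightarrow> ('a \<Rightarrow> 'a \<Rightarrow> bool) \<Rightarrow> 'a \<Rightarrow> 'a \<Rightarrow> nat" where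
  "gdist V E u v = (LEAST n. \<exists>p. walk V E p \<and> hd p = u \<and> last p = v \<and> length p = Suc n)"

definition resolving_set_of_edge :: "'a set \<Rightarrow> ('a \<Rightarrow> 'a \<Rightarrow> bool) \<Rightarrow> 'a \<Rightarrow> 'a \<Rightarrow> 'a set" where
  "resolving_set_of_edge V E u v = {x \<in> V. gdist V E u x \<noteq> gdist V E v x}"

definition local_resolving_function :: "'a set \<Rightarrow> ('a \<Rightarrow> 'a \<Rightarrow> bool) \<Rightarrow> ('a \<Rightarrow> real) \<Rightarrow> bool" where
  "local_resolving_function V E f \<longleftrightarrow>
     (\<forall>v\<in>V. 0 \<le> f v \<and> f v \<le> 1) \<and>
     (\<forall>u v. E u v \<longrightarrow> (\<Sum>x\<in>resolving_set_of_edge V E u v. f x) \<ge> 1)"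

definition ldim_f :: "'a set \<Rightarrow> ('a \<Rightarrow> 'a \<Rightarrow> bool) \<Rightarrow> real" where
  "ldim_f V E = Inf {(\<Sum>v\<in>V. f v) | f. local_resolving_function V E f}"

end

theory Submission
  imports Defs
begin

text \<open>Both endpoints of an edge uv resolve it, since d(u,u) = 0 \<noteq> d(v,u).
  Hence the constant function 1/2 is a local resolving function, of total weight n/2.\<close>

lemma gdist_self:
  assumes "u \<in> V"
  shows "gdist V E u u = 0"
proof -
  have "walk V E [u]" using assms by (simp add: walk_def)
  then show ?thesis unfolding gdist_def
    by (intro Least_eq_0) (rule exI[of _ "[u]"], simp)
qed

lemma gdist_neq_0_if_edge:
  assumes "simple_graph V E" "E u v"
  shows "gdist V E u v \<noteq> 0"
proof
  assume dist0: "gdist V E u v = 0"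
  have uv: "u \<in> V" "v \<in> V" "u \<noteq> v" using assms unfolding simple_graph_def by metis+
  have "walk V E [u, v]" using uv assms(2) by (auto simp: walk_def less_Suc_eq)
  then have "\<exists>p. walk V E p \<and> hd p = u \<and> last p = v \<and> length p = Suc 1" by fastforce
  then have "\<exists>p. walk V E p \<and> hd p = u \<and> last p = v \<and> length p = Suc (gdist V E u v)"
    unfolding gdist_def by (rule LeastI)
  then obtain p where "hd p = u" "last p = v" "length p = 1" using dist0 by auto
  then show False using uv by (cases p) auto
qed

lemma endpoints_in_resolving_set_of_edge:
  assumes "simple_graph V E" "E u v"
  shows "{u, v} \<subseteq> resolving_set_of_edge V E u v"
proof -
  have "u \<in> V" "v \<in> V" "E v u" using assms unfolding simple_graph_def by metis+
  then show ?thesis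
    using gdist_self[of u V E] gdist_self[of v V E] assms(2)
      gdist_neq_0_if_edge[OF assms(1), of u v] gdist_neq_0_if_edge[OF assms(1), of v u]
    by (auto simp: resolving_set_of_edge_def)
qed

lemma local_resolving_function_half:
  assumes "simple_graph V E"
  shows "local_resolving_function V E (\<lambda>_. 1/2)"
  unfolding local_resolving_function_def
proof (intro conjI allI impI)
  fix u v assume edge: "E u v"
  have "u \<noteq> v" using assms edge unfolding simple_graph_def by metis
  moreover have "finite (resolving_set_of_edge V E u v)"
    using assms by (simp add: simple_graph_def resolving_set_of_edge_def)
  ultimately have "(\<Sum>x\<in>{u, v}. 1/2 :: real) \<le> (\<Sum>x\<in>resolving_set_of_edge V E u v. 1/2)"
    using endpoints_in_resolving_set_of_edge[OF assms edge] by (intro sum_mono2) auto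
  then show "1 \<le> (\<Sum>x\<in>resolving_set_of_edge V E u v. 1/2 :: real)"
    using \<open>u \<noteq> v\<close> by simp
qed simp

lemma ldim_f_le_sum:
  assumes "local_resolving_function V E f"
  shows "ldim_f V E \<le> (\<Sum>v\<in>V. f v)"
proof -
  have "bdd_below {(\<Sum>v\<in>V. f v) | f. local_resolving_function V E f}"
    by (rule bdd_belowI[of _ 0]) (auto simp: local_resolving_function_def intro!: sum_nonneg)
  then show ?thesis unfolding ldim_f_def using assms by (intro cInf_lower) auto
qed

theorem corollary2p9:
  fixes V :: "'a set" and E :: "'a \<Rightarrow> 'a \<Rightarrow> bool"
  assumes "simple_graph V E" and "connected_graph V E" and "card V \<ge> 2"
  shows "ldim_f V E \<le> real (card V) / 2"
proof -
  have "ldim_f V E \<le> (\<Sum>v\<in>V. 1/2 :: real)"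
    using ldim_f_le_sum[OF local_resolving_function_half[OF assms(1)]] .
  then show ?thesis by simp
qed

end
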